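(* For all positive integers $N_1,N_2,q,r$ with $q> r\geq 1$, we have $f_{q,r}(N_1)f_{q,r}(N_2)\geq f_{q,r}(N_1N_2)$.
   Context: For a $q$-edge-colored complete graph $K$ on vertex set $[N]$ with its natural order, $f_{q,r}(K)$ is the maximum number of vertices of a monotone path (vertices strictly increasing in traversal order) in $K$ whose edges use at most $r$ colors; $f_{q,r}(N)$ is the minimum of $f_{q,r}(K)$ over all such $q$-edge-colored $K$ on $N$ vertices. *)

theory Defs
  imports Main
begin

text \<open>A q-edge-coloring of the complete graph on vertex set [N] = {1..N}:
  the edge {i,j} with i < j receives colour c i j, colours are taken from {0..<q}.\<close>
definition edge_coloring :: "nat \<Rightarrow> nat \<Rightarrow> (nat \<Rightarrow> nat \<Rightarrow> nat) \<Rightarrow> bool" where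
  "edge_coloring q N c \<longleftrightarrow> (\<forall>i j. 1 \<le> i \<and> i < j \<and> j \<le> N \<longrightarrow> c i j < q)"

definition path_colors :: "(nat \<Rightarrow> nat \<Rightarrow> nat) \<Rightarrow> nat list \<Rightarrow> nat set" where
  "path_colors c vs = {c (vs ! k) (vs ! Suc k) | k. Suc k < length vs}"

definition good_path :: "nat \<Rightarrow> nat \<Rightarrow> (nat \<Rightarrow> nat \<Rightarrow> nat) \<Rightarrow> nat list \<Rightarrow> bool" where
  "good_path N r c vs \<longleftrightarrow> sorted_wrt (<) vs \<and> set vs \<subseteq> {1..N} \<and> card (path_colors c vs) \<le> r"

definition f_K :: "nat \<Rightarrow> nat \<Rightarrow> (nat \<Rightarrow> nat \<Rightarrow> nat) \<Rightarrow> nat" where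
  "f_K N r c = Max (length ` {vs. good_path N r c vs})"

definition f_qr :: "nat \<Rightarrow> nat \<Rightarrow> nat \<Rightarrow> nat" where
  "f_qr q r N = Min ((\<lambda>c. f_K N r c) ` {c. edge_coloring q N c})"

end

theory Submission
  imports Defs "HOL-Library.Sublist"
begin

(* Take colourings c1 of K_N1 and c2 of K_N2 attaining f_{q,r}, split [N1 * N2] into N1
   consecutive blocks of N2 vertices, and colour an edge inside a block by the c2-colour of
   the positions of its ends and an edge between two blocks by the c1-colour of the blocks.
   A monotone path in this colouring meets the blocks in increasing order; merging consecutive
   vertices in the same block yields a monotone path in c1 whose colours are among those of
   the path, so it meets at most f_{q,r}(c1) blocks.  Inside one block its vertices form a
   monotone path in c2 with colours among those of the path, so there are at most f_{q,r}(c2)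
   of them. *)

lemma path_colors_conv_zip: "path_colors c vs = case_prod c ` set (zip vs (tl vs))"
  unfolding path_colors_def by (force simp: set_zip nth_tl)

lemma path_colors_Nil [simp]: "path_colors c [] = {}"
  by (simp add: path_colors_def)

lemma path_colors_Cons:
  "path_colors c (u # vs) = (case vs of [] \<Rightarrow> {} | v # _ \<Rightarrow> insert (c u v) (path_colors c vs))"
  by (cases vs) (auto simp: path_colors_conv_zip)

lemma finite_path_colors [simp]: "finite (path_colors c vs)"
  by (simp add: path_colors_conv_zip)

lemma path_colors_append_subset:
  "path_colors c xs \<union> path_colors c ys \<subseteq> path_colors c (xs @ ys)"
proof (induction xs)
  case (Cons x xs)
  then show ?case by (cases xs; cases ys) (auto simp: path_colors_Cons)
qed simp

lemma path_colors_mono_sublist: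
  assumes "sublist ys vs"
  shows "path_colors c ys \<subseteq> path_colors c vs"
  using assms path_colors_append_subset unfolding sublist_def by blast

lemma path_colors_map_eq:
  assumes "\<And>u v. u \<in> set vs \<Longrightarrow> v \<in> set vs \<Longrightarrow> c' (g u) (g v) = c u v"
  shows "path_colors c' (map g vs) = path_colors c vs"
proof -
  have "zip (map g vs) (tl (map g vs)) = map (map_prod g g) (zip vs (tl vs))"
    by (simp add: map_tl[symmetric] zip_map_map map_prod_def)
  moreover have "u \<in> set vs \<and> v \<in> set vs" if "(u, v) \<in> set (zip vs (tl vs))" for u v
    using that by (cases vs) (auto dest: set_zip_leftD set_zip_rightD)
  ultimately show ?thesis
    using assms by (auto simp: path_colors_conv_zip image_image intro!: image_cong)
qed

lemma path_colors_remdups_adj_map: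
  assumes "\<And>u v. g u \<noteq> g v \<Longrightarrow> c' (g u) (g v) = c u v"
  shows "path_colors c' (remdups_adj (map g vs)) \<subseteq> path_colors c vs"
proof (induction vs rule: induct_list012)
  case (3 u v vs)
  show ?case
  proof (cases "g u = g v")
    case True
    then have "remdups_adj (map g (u # v # vs)) = remdups_adj (map g (v # vs))" by simp
    with "3.IH"(2) show ?thesis by (auto simp: path_colors_Cons)
  next
    case False
    obtain rest where rest: "remdups_adj (map g (v # vs)) = g v # rest"
      by (simp add: remdups_adj_Cons')
    have "remdups_adj (map g (u # v # vs)) = g u # g v # rest"
      using False rest by simp
    with "3.IH"(2) rest False assms show ?thesis by (auto simp: path_colors_Cons)
  qed
qed (simp_all add: path_colors_Cons)

lemma sorted_wrt_less_remdups_adj: "sorted xs \<Longrightarrow> sorted_wrt (<) (remdups_adj xs)"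
  by (induction xs rule: remdups_adj.induct) (auto simp: less_le_trans)

lemma length_le_mult_length_remdups_adj:
  assumes "\<And>ys a. sublist ys xs \<Longrightarrow> \<forall>y\<in>set ys. g y = a \<Longrightarrow> length ys \<le> M"
  shows "length xs \<le> M * length (remdups_adj (map g xs))"
  using assms
proof (induction "length xs" arbitrary: xs rule: less_induct)
  case less
  show ?case
  proof (cases xs)
    case Nil
    then show ?thesis by simp
  next
    case (Cons x xs')
    let ?same = "\<lambda>v. g v = g x"
    define run where "run = x # takeWhile ?same xs'"
    define rest where "rest = dropWhile ?same xs'"
    have xs_eq: "xs = run @ rest"
      by (simp add: Cons run_def rest_def)
    have "sublist run xs" by (simp add: xs_eq)
    moreover have "\<forall>y\<in>set run. g y = g x"
      by (auto simp: run_def dest: set_takeWhileD)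
    ultimately have "length run \<le> M" by (rule less.prems)
    moreover have "length rest \<le> M * length (remdups_adj (map g rest))"
    proof (rule less.hyps)
      show "length rest < length xs" by (simp add: xs_eq run_def)
      fix ys a assume "sublist ys rest" and "\<forall>y\<in>set ys. g y = a"
      moreover from \<open>sublist ys rest\<close> have "sublist ys xs"
        by (rule sublist_order.order_trans) (simp add: xs_eq)
      ultimately show "length ys \<le> M" using less.prems by blast
    qed
    moreover have "remdups_adj (map g xs) = g x # remdups_adj (map g rest)"
      by (simp add: Cons rest_def remdups_adj_Cons' dropWhile_map comp_def)
    ultimately show ?thesis
      by (simp add: xs_eq)
  qed
qed

lemma good_path_length_le:
  assumes "good_path N r c vs"
  shows "length vs \<le> N"
proof -
  from assms have "distinct vs" and "set vs \<subseteq> {1..N}"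
    by (auto simp: good_path_def strict_sorted_iff)
  then have "length vs = card (set vs)" by (simp add: distinct_card)
  also have "\<dots> \<le> card {1..N}" using \<open>set vs \<subseteq> {1..N}\<close> by (rule card_mono[rotated]) simp
  finally show ?thesis by simp
qed

lemma finite_good_path_lengths: "finite (length ` {vs. good_path N r c vs})"
  by (rule finite_subset[of _ "{0..N}"]) (auto dest: good_path_length_le)

lemma length_le_f_K: "good_path N r c vs \<Longrightarrow> length vs \<le> f_K N r c"
  unfolding f_K_def using finite_good_path_lengths by (intro Max_ge) auto

lemma f_K_attained:
  obtains vs where "good_path N r c vs" and "length vs = f_K N r c"
proof -
  have "good_path N r c []" by (simp add: good_path_def path_colors_def)
  then have "f_K N r c \<in> length ` {vs. good_path N r c vs}"
    unfolding f_K_def using finite_good_path_lengths by (intro Max_in) auto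
  then show ?thesis using that by auto
qed

lemma f_K_le_N: "f_K N r c \<le> N"
  by (metis f_K_attained good_path_length_le)

lemma f_qr_le_f_K: "edge_coloring q N c \<Longrightarrow> f_qr q r N \<le> f_K N r c"
  unfolding f_qr_def
  by (rule Min_le) (auto intro: finite_subset[of _ "{0..N}"] simp: f_K_le_N)

lemma f_qr_attained:
  assumes "0 < q"
  obtains c where "edge_coloring q N c" and "f_qr q r N = f_K N r c"
proof -
  have "edge_coloring q N (\<lambda>_ _. 0)" using assms by (simp add: edge_coloring_def)
  then have "f_qr q r N \<in> (\<lambda>c. f_K N r c) ` {c. edge_coloring q N c}"
    unfolding f_qr_def by (intro Min_in) (auto intro: finite_subset[of _ "{0..N}"] simp: f_K_le_N)
  then show ?thesis using that by auto
qed

definition block_of :: "nat \<Rightarrow> nat \<Rightarrow> nat" where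
  "block_of n v = (v - 1) div n + 1"

definition index_in_block :: "nat \<Rightarrow> nat \<Rightarrow> nat" where
  "index_in_block n v = (v - 1) mod n + 1"

definition lex_product_coloring ::
  "nat \<Rightarrow> (nat \<Rightarrow> nat \<Rightarrow> nat) \<Rightarrow> (nat \<Rightarrow> nat \<Rightarrow> nat) \<Rightarrow> nat \<Rightarrow> nat \<Rightarrow> nat" where
  "lex_product_coloring n c1 c2 i j =
     (if block_of n i = block_of n j then c2 (index_in_block n i) (index_in_block n j)
      else c1 (block_of n i) (block_of n j))"

lemma block_of_mono: "i \<le> j \<Longrightarrow> block_of n i \<le> block_of n j"
  unfolding block_of_def by (simp add: div_le_mono)

lemma block_of_range: "v \<in> {1..N * n} \<Longrightarrow> block_of n v \<in> {1..N}"
  unfolding block_of_def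
  by (cases "n = 0") (auto simp: Suc_le_eq less_mult_imp_div_less)

lemma index_in_block_range: "0 < n \<Longrightarrow> index_in_block n v \<in> {1..n}"
  unfolding index_in_block_def by (simp add: Suc_leI)

lemma index_in_block_less:
  assumes "1 \<le> i" and "i < j" and "block_of n i = block_of n j"
  shows "index_in_block n i < index_in_block n j"
proof -
  have "(i - 1) div n * n = (j - 1) div n * n" using assms(3) by (simp add: block_of_def)
  then have "(i - 1) mod n < (j - 1) mod n"
    using assms(1,2) div_mult_mod_eq[of "i - 1" n] div_mult_mod_eq[of "j - 1" n] by linarith
  then show ?thesis by (simp add: index_in_block_def)
qed

lemma edge_coloring_lex_product:
  assumes "edge_coloring q N c1" and "edge_coloring q n c2" and "0 < n"
  shows "edge_coloring q (N * n) (lex_product_coloring n c1 c2)"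
  unfolding edge_coloring_def
proof (intro allI impI)
  fix i j assume ij: "1 \<le> i \<and> i < j \<and> j \<le> N * n"
  show "lex_product_coloring n c1 c2 i j < q"
  proof (cases "block_of n i = block_of n j")
    case True
    then show ?thesis
      using ij assms index_in_block_less[of i j n] index_in_block_range[of n]
      by (fastforce simp: lex_product_coloring_def edge_coloring_def)
  next
    case False
    then have "block_of n i < block_of n j" using block_of_mono[of i j n] ij by simp
    then show ?thesis
      using False ij assms(1) block_of_range[of i N n] block_of_range[of j N n]
      by (auto simp: lex_product_coloring_def edge_coloring_def)
  qed
qed

lemma good_path_blocks:
  assumes "good_path (N * n) r (lex_product_coloring n c1 c2) vs"
  shows "good_path N r c1 (remdups_adj (map (block_of n) vs))"
proof -
  have "sorted_wrt (<) vs" using assms by (simp add: good_path_def)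
  then have "sorted (map (block_of n) vs)"
    unfolding sorted_map by (rule sorted_wrt_mono_rel[rotated]) (simp add: block_of_mono)
  moreover have "path_colors c1 (remdups_adj (map (block_of n) vs))
                 \<subseteq> path_colors (lex_product_coloring n c1 c2) vs"
    by (rule path_colors_remdups_adj_map) (simp add: lex_product_coloring_def)
  then have "card (path_colors c1 (remdups_adj (map (block_of n) vs))) \<le> r"
    using assms card_mono[OF finite_path_colors] unfolding good_path_def by (meson order_trans)
  ultimately show ?thesis
    using assms block_of_range[of _ N n]
    by (auto simp: good_path_def sorted_wrt_less_remdups_adj)
qed

lemma good_path_within_block:
  assumes "good_path (N * n) r (lex_product_coloring n c1 c2) vs" and "0 < n"
    and "sublist ys vs" and "\<forall>v\<in>set ys. block_of n v = b"
  shows "good_path n r c2 (map (index_in_block n) ys)"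
proof -
  obtain ps ss where vs: "vs = ps @ ys @ ss" using assms(3) by (auto simp: sublist_def)
  have ys: "sorted_wrt (<) ys" "set ys \<subseteq> {1..N * n}"
    using assms(1) by (auto simp: good_path_def vs sorted_wrt_append)
  have sorted: "sorted_wrt (<) (map (index_in_block n) ys)"
    unfolding sorted_wrt_map using ys(1)
  proof (rule sorted_wrt_mono_rel[rotated])
    fix u v assume "u \<in> set ys" "v \<in> set ys" "u < v"
    then show "index_in_block n u < index_in_block n v"
      using ys(2) assms(4) by (intro index_in_block_less) auto
  qed
  have "path_colors c2 (map (index_in_block n) ys)
        = path_colors (lex_product_coloring n c1 c2) ys"
    using assms(4) by (intro path_colors_map_eq) (simp add: lex_product_coloring_def)
  also have "\<dots> \<subseteq> path_colors (lex_product_coloring n c1 c2) vs"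
    using assms(3) by (rule path_colors_mono_sublist)
  finally have "card (path_colors c2 (map (index_in_block n) ys)) \<le> r"
    using assms(1) card_mono[OF finite_path_colors] unfolding good_path_def by (meson order_trans)
  with sorted show ?thesis
    using assms(2) index_in_block_range by (auto simp: good_path_def)
qed

lemma good_path_lex_product_length_le:
  assumes "good_path (N * n) r (lex_product_coloring n c1 c2) vs" and "0 < n"
  shows "length vs \<le> f_K N r c1 * f_K n r c2"
proof -
  have "length vs \<le> f_K n r c2 * length (remdups_adj (map (block_of n) vs))"
  proof (rule length_le_mult_length_remdups_adj)
    fix ys b assume "sublist ys vs" "\<forall>v\<in>set ys. block_of n v = b"
    then have "length (map (index_in_block n) ys) \<le> f_K n r c2"
      using assms by (intro length_le_f_K good_path_within_block)
    then show "length ys \<le> f_K n r c2" by simp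
  qed
  also have "\<dots> \<le> f_K n r c2 * f_K N r c1"
    using assms(1) by (intro mult_le_mono2 length_le_f_K good_path_blocks)
  finally show ?thesis by (simp add: mult.commute)
qed

lemma f_K_lex_product_le:
  "0 < n \<Longrightarrow> f_K (N * n) r (lex_product_coloring n c1 c2) \<le> f_K N r c1 * f_K n r c2"
  by (metis f_K_attained good_path_lex_product_length_le)

theorem corollary3p4:
  fixes N1 N2 q r :: nat
  assumes "N1 \<ge> 1" and "N2 \<ge> 1" and "r \<ge> 1" and "q > r"
  shows "f_qr q r N1 * f_qr q r N2 \<ge> f_qr q r (N1 * N2)"
proof -
  from \<open>q > r\<close> have "0 < q" by simp
  then obtain c1 c2 where
    c1: "edge_coloring q N1 c1" "f_qr q r N1 = f_K N1 r c1" and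
    c2: "edge_coloring q N2 c2" "f_qr q r N2 = f_K N2 r c2"
    by (metis f_qr_attained)
  from \<open>N2 \<ge> 1\<close> have "0 < N2" by simp
  have "f_qr q r (N1 * N2) \<le> f_K (N1 * N2) r (lex_product_coloring N2 c1 c2)"
    using c1(1) c2(1) \<open>0 < N2\<close> by (intro f_qr_le_f_K edge_coloring_lex_product)
  also have "\<dots> \<le> f_K N1 r c1 * f_K N2 r c2"
    using \<open>0 < N2\<close> by (rule f_K_lex_product_le)
  finally show ?thesis using c1(2) c2(2) by simp
qed

end
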